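(* Let $R=\prod_{i=1}^nR_i$ be a direct product of left localization maximal rings $R_1,\ldots,R_n$. Then every nonzero element of $R$ is left localizable if and only if $R_1,\ldots,R_n$ are division rings.
   Context: All rings are associative with $1$. A multiplicative subset $S$ of $R$ ($1\in S$, $0\notin S$, closed under multiplication) is a left Ore set if $Sr\cap Rs\neq\emptyset$ for all $r\in R$, $s\in S$; for it, $\mathrm{ass}(S):=\{r\in R: sr=0\text{ for some } s\in S\}$. A left Ore set $S$ is a left denominator set if $rs=0$ ($r\in R$, $s\in S$) implies $tr=0$ for some $t\in S$; $\mathrm{Den}_l(R)$ denotes the set of left denominator sets. An element $r\in R$ is left localizable if $r\in S$ for some $S\in\mathrm{Den}_l(R)$. For a ring $A$, $S_0(A)$ is the largest left Ore set of $A$ consisting of regular elements and $Q_l(A):=S_0(A)^{-1}A$. A ring $A$ is a left localization maximal ring if $A=Q_l(A)$ (i.e. $S_0(A)$ consists of units) and $\{\mathrm{ass}(S):S\in\mathrm{Den}_l(A)\}=\{0\}$. *)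

theory Defs
  imports "HOL-Algebra.Ring"
begin

definition mult_subset :: "('a, 'b) ring_scheme \<Rightarrow> 'a set \<Rightarrow> bool" where
  "mult_subset R S \<longleftrightarrow> S \<subseteq> carrier R \<and> \<one>\<^bsub>R\<^esub> \<in> S \<and> \<zero>\<^bsub>R\<^esub> \<notin> S \<and>
     (\<forall>s\<in>S. \<forall>t\<in>S. s \<otimes>\<^bsub>R\<^esub> t \<in> S)"

definition left_Ore :: "('a, 'b) ring_scheme \<Rightarrow> 'a set \<Rightarrow> bool" where
  "left_Ore R S \<longleftrightarrow> mult_subset R S \<and>
     (\<forall>r\<in>carrier R. \<forall>s\<in>S. \<exists>s'\<in>S. \<exists>r'\<in>carrier R. s' \<otimes>\<^bsub>R\<^esub> r = r' \<otimes>\<^bsub>R\<^esub> s)"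

definition ass :: "('a, 'b) ring_scheme \<Rightarrow> 'a set \<Rightarrow> 'a set" where
  "ass R S = {r \<in> carrier R. \<exists>s\<in>S. s \<otimes>\<^bsub>R\<^esub> r = \<zero>\<^bsub>R\<^esub>}"

definition left_denominator :: "('a, 'b) ring_scheme \<Rightarrow> 'a set \<Rightarrow> bool" where
  "left_denominator R S \<longleftrightarrow> left_Ore R S \<and>
     (\<forall>r\<in>carrier R. \<forall>s\<in>S. r \<otimes>\<^bsub>R\<^esub> s = \<zero>\<^bsub>R\<^esub> \<longrightarrow> (\<exists>t\<in>S. t \<otimes>\<^bsub>R\<^esub> r = \<zero>\<^bsub>R\<^esub>))"

definition Den_l :: "('a, 'b) ring_scheme \<Rightarrow> 'a set set" where
  "Den_l R = {S. left_denominator R S}"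

definition left_localizable :: "('a, 'b) ring_scheme \<Rightarrow> 'a \<Rightarrow> bool" where
  "left_localizable R r \<longleftrightarrow> (\<exists>S\<in>Den_l R. r \<in> S)"

definition regular_elems :: "('a, 'b) ring_scheme \<Rightarrow> 'a set" where
  "regular_elems R = {r \<in> carrier R. \<forall>x\<in>carrier R.
     (r \<otimes>\<^bsub>R\<^esub> x = \<zero>\<^bsub>R\<^esub> \<longrightarrow> x = \<zero>\<^bsub>R\<^esub>) \<and> (x \<otimes>\<^bsub>R\<^esub> r = \<zero>\<^bsub>R\<^esub> \<longrightarrow> x = \<zero>\<^bsub>R\<^esub>)}"

text \<open>S_0(A): the largest left Ore set consisting of regular elements, i.e. the
union of all such sets (which is itself one of them).\<close>
definition S0 :: "('a, 'b) ring_scheme \<Rightarrow> 'a set" where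
  "S0 R = \<Union>{S. left_Ore R S \<and> S \<subseteq> regular_elems R}"

definition left_loc_maximal :: "('a, 'b) ring_scheme \<Rightarrow> bool" where
  "left_loc_maximal R \<longleftrightarrow> S0 R \<subseteq> Units R \<and>
     {ass R S | S. S \<in> Den_l R} = {{\<zero>\<^bsub>R\<^esub>}}"

definition division_ring :: "('a, 'b) ring_scheme \<Rightarrow> bool" where
  "division_ring R \<longleftrightarrow> ring R \<and> \<one>\<^bsub>R\<^esub> \<noteq> \<zero>\<^bsub>R\<^esub> \<and> carrier R - {\<zero>\<^bsub>R\<^esub>} \<subseteq> Units R"

text \<open>Direct product of the rings R 0, ..., R (n-1) (componentwise operations,
elements are extensional functions on {..<n}).\<close>
definition prod_ring :: "nat \<Rightarrow> (nat \<Rightarrow> ('a, 'b) ring_scheme) \<Rightarrow> (nat \<Rightarrow> 'a) ring" where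
  "prod_ring n R =
    \<lparr>carrier = PiE {..<n} (\<lambda>i. carrier (R i)),
     monoid.mult = (\<lambda>f g. \<lambda>i\<in>{..<n}. f i \<otimes>\<^bsub>R i\<^esub> g i),
     one = (\<lambda>i\<in>{..<n}. \<one>\<^bsub>R i\<^esub>),
     zero = (\<lambda>i\<in>{..<n}. \<zero>\<^bsub>R i\<^esub>),
     add = (\<lambda>f g. \<lambda>i\<in>{..<n}. f i \<oplus>\<^bsub>R i\<^esub> g i)\<rparr>"

end

theory Submission
  imports Defs
begin

text \<open>If every \<open>R\<^sub>i\<close> is a division ring, a nonzero \<open>r\<close> lies in the set of all elements that
do not vanish on the support of \<open>r\<close>; the idempotent \<open>e\<close> with \<open>e\<^sub>i = 1\<close> on the support and
\<open>0\<close> elsewhere witnesses both the Ore condition and the denominator condition for this set.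
Conversely, if \<open>a \<noteq> 0\<close> in \<open>R\<^sub>k\<close>, the element concentrated at \<open>k\<close> with value \<open>a\<close> lies in a
denominator set \<open>S\<close> of the product; the \<open>k\<close>-th projection of \<open>S\<close> is a denominator set of
\<open>R\<^sub>k\<close> containing \<open>a\<close>. Since \<open>R\<^sub>k\<close> is left localization maximal, the projection has zero
\<open>ass\<close>, hence consists of regular elements, hence lies in \<open>S\<^sub>0(R\<^sub>k)\<close>, which consists of units.\<close>

lemma left_loc_maximal_ass_eq:
  assumes "left_loc_maximal A" "S \<in> Den_l A"
  shows "ass A S = {\<zero>\<^bsub>A\<^esub>}"
  using assms unfolding left_loc_maximal_def by blast

lemma left_loc_maximal_one_neq_zero:
  assumes "left_loc_maximal A"
  shows "\<one>\<^bsub>A\<^esub> \<noteq> \<zero>\<^bsub>A\<^esub>"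
proof -
  obtain S where "S \<in> Den_l A"
    using assms unfolding left_loc_maximal_def by blast
  thus ?thesis
    unfolding Den_l_def left_denominator_def left_Ore_def mult_subset_def by auto
qed

text \<open>Right regularity of \<open>s \<in> S\<close> uses the denominator condition to turn \<open>x s = 0\<close> into
\<open>t x = 0\<close> with \<open>t \<in> S\<close>.\<close>
lemma left_denominator_regular_if_ass_trivial:
  assumes S: "left_denominator A S" and ass: "ass A S = {\<zero>\<^bsub>A\<^esub>}"
  shows "S \<subseteq> regular_elems A"
proof
  fix s assume s: "s \<in> S"
  have carr: "S \<subseteq> carrier A"
    using S unfolding left_denominator_def left_Ore_def mult_subset_def by blast
  have "x = \<zero>\<^bsub>A\<^esub>" if "x \<in> carrier A" "t \<in> S" "t \<otimes>\<^bsub>A\<^esub> x = \<zero>\<^bsub>A\<^esub>" for x t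
    using that ass unfolding ass_def by blast
  moreover have "\<exists>t\<in>S. t \<otimes>\<^bsub>A\<^esub> x = \<zero>\<^bsub>A\<^esub>"
    if "x \<in> carrier A" "x \<otimes>\<^bsub>A\<^esub> s = \<zero>\<^bsub>A\<^esub>" for x
    using S s that unfolding left_denominator_def by blast
  ultimately show "s \<in> regular_elems A"
    using s carr unfolding regular_elems_def by blast
qed

lemma left_loc_maximal_Den_l_subset_Units:
  assumes "left_loc_maximal A" "S \<in> Den_l A"
  shows "S \<subseteq> Units A"
proof -
  have S: "left_denominator A S" using assms(2) unfolding Den_l_def by simp
  then have "S \<subseteq> regular_elems A"
    using left_denominator_regular_if_ass_trivial left_loc_maximal_ass_eq[OF assms] by blast
  with S have "S \<subseteq> S0 A"
    unfolding S0_def left_denominator_def by blast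
  with assms(1) show ?thesis
    unfolding left_loc_maximal_def by blast
qed

lemma division_ring_Units:
  "division_ring A \<Longrightarrow> x \<in> carrier A \<Longrightarrow> x \<noteq> \<zero>\<^bsub>A\<^esub> \<Longrightarrow> x \<in> Units A"
  unfolding division_ring_def by blast

lemma division_ring_integral:
  assumes D: "division_ring A" and a: "a \<in> carrier A" and b: "b \<in> carrier A"
    and ab: "a \<otimes>\<^bsub>A\<^esub> b = \<zero>\<^bsub>A\<^esub>"
  shows "a = \<zero>\<^bsub>A\<^esub> \<or> b = \<zero>\<^bsub>A\<^esub>"
proof (rule disjCI)
  interpret ring A using D by (simp add: division_ring_def)
  assume "b \<noteq> \<zero>\<^bsub>A\<^esub>"
  with D b have u: "b \<in> Units A" by (rule division_ring_Units)
  have "a = (a \<otimes>\<^bsub>A\<^esub> b) \<otimes>\<^bsub>A\<^esub> inv\<^bsub>A\<^esub> b"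
    using u a by (simp add: m_assoc Units_closed)
  with ab u show "a = \<zero>\<^bsub>A\<^esub>" by simp
qed

lemma prod_ring_carrier: "carrier (prod_ring n R) = (\<Pi>\<^sub>E i\<in>{..<n}. carrier (R i))"
  by (simp add: prod_ring_def)

lemma prod_ring_mult: "f \<otimes>\<^bsub>prod_ring n R\<^esub> g = (\<lambda>i\<in>{..<n}. f i \<otimes>\<^bsub>R i\<^esub> g i)"
  by (simp add: prod_ring_def)

lemma prod_ring_one: "\<one>\<^bsub>prod_ring n R\<^esub> = (\<lambda>i\<in>{..<n}. \<one>\<^bsub>R i\<^esub>)"
  by (simp add: prod_ring_def)

lemma prod_ring_zero: "\<zero>\<^bsub>prod_ring n R\<^esub> = (\<lambda>i\<in>{..<n}. \<zero>\<^bsub>R i\<^esub>)"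
  by (simp add: prod_ring_def)

lemma prod_ring_carrier_apply:
  "f \<in> carrier (prod_ring n R) \<Longrightarrow> i < n \<Longrightarrow> f i \<in> carrier (R i)"
  by (auto simp: prod_ring_carrier)

lemma prod_ring_mult_closed:
  assumes "\<forall>i<n. ring (R i)" "f \<in> carrier (prod_ring n R)" "g \<in> carrier (prod_ring n R)"
  shows "f \<otimes>\<^bsub>prod_ring n R\<^esub> g \<in> carrier (prod_ring n R)"
  using assms prod_ring_carrier_apply[OF assms(2)] prod_ring_carrier_apply[OF assms(3)]
  by (simp add: prod_ring_carrier prod_ring_mult ring.ring_simprules)

lemma prod_ring_eq_zero_iff:
  assumes "f \<in> carrier (prod_ring n R)"
  shows "f = \<zero>\<^bsub>prod_ring n R\<^esub> \<longleftrightarrow> (\<forall>i<n. f i = \<zero>\<^bsub>R i\<^esub>)"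
  using assms by (auto simp: prod_ring_carrier prod_ring_zero PiE_def extensional_def)

definition prod_single :: "nat \<Rightarrow> (nat \<Rightarrow> ('a, 'b) ring_scheme) \<Rightarrow> nat \<Rightarrow> 'a \<Rightarrow> nat \<Rightarrow> 'a" where
  "prod_single n R k x = (\<lambda>i\<in>{..<n}. if i = k then x else \<zero>\<^bsub>R i\<^esub>)"

lemma prod_single_apply_self [simp]: "k < n \<Longrightarrow> prod_single n R k x k = x"
  by (simp add: prod_single_def)

lemma prod_single_closed:
  assumes "\<forall>i<n. ring (R i)" "k < n" "x \<in> carrier (R k)"
  shows "prod_single n R k x \<in> carrier (prod_ring n R)"
  using assms by (auto simp: prod_single_def prod_ring_carrier ring.ring_simprules)

lemma prod_single_zero: "prod_single n R k \<zero>\<^bsub>R k\<^esub> = \<zero>\<^bsub>prod_ring n R\<^esub>"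
  by (auto simp: prod_single_def prod_ring_zero intro: restrict_ext)

lemma prod_single_mult_left:
  assumes "\<forall>i<n. ring (R i)" "k < n" "s \<in> carrier (prod_ring n R)"
  shows "s \<otimes>\<^bsub>prod_ring n R\<^esub> prod_single n R k x = prod_single n R k (s k \<otimes>\<^bsub>R k\<^esub> x)"
  using assms
  by (auto simp: prod_single_def prod_ring_mult prod_ring_carrier_apply ring.ring_simprules
      intro!: restrict_ext)

lemma prod_single_mult_right:
  assumes "\<forall>i<n. ring (R i)" "k < n" "s \<in> carrier (prod_ring n R)"
  shows "prod_single n R k x \<otimes>\<^bsub>prod_ring n R\<^esub> s = prod_single n R k (x \<otimes>\<^bsub>R k\<^esub> s k)"
  using assms
  by (auto simp: prod_single_def prod_ring_mult prod_ring_carrier_apply ring.ring_simprules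
      intro!: restrict_ext)

lemma mult_subset_prod_ring_proj:
  assumes k: "k < n" and mS: "mult_subset (prod_ring n R) S"
    and nz: "\<zero>\<^bsub>R k\<^esub> \<notin> (\<lambda>s. s k) ` S"
  shows "mult_subset (R k) ((\<lambda>s. s k) ` S)"
  unfolding mult_subset_def
proof (intro conjI ballI)
  let ?P = "prod_ring n R" and ?Sk = "(\<lambda>s. s k) ` S"
  show "?Sk \<subseteq> carrier (R k)"
    using mS k prod_ring_carrier_apply unfolding mult_subset_def by blast
  have "\<one>\<^bsub>?P\<^esub> \<in> S" and "\<one>\<^bsub>?P\<^esub> k = \<one>\<^bsub>R k\<^esub>"
    using mS k unfolding mult_subset_def by (simp_all add: prod_ring_one)
  then show "\<one>\<^bsub>R k\<^esub> \<in> ?Sk" by (metis image_eqI)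
  show "\<zero>\<^bsub>R k\<^esub> \<notin> ?Sk" by (rule nz)
next
  fix x y assume "x \<in> (\<lambda>s. s k) ` S" "y \<in> (\<lambda>s. s k) ` S"
  then obtain s t where "s \<in> S" "t \<in> S" "x = s k" "y = t k" by blast
  moreover have "(s \<otimes>\<^bsub>prod_ring n R\<^esub> t) k = s k \<otimes>\<^bsub>R k\<^esub> t k"
    using k by (simp add: prod_ring_mult)
  ultimately show "x \<otimes>\<^bsub>R k\<^esub> y \<in> (\<lambda>s. s k) ` S"
    using mS unfolding mult_subset_def by (metis image_eqI)
qed

text \<open>The Ore and denominator conditions of the projection are those of \<open>S\<close> applied to
elements concentrated at \<open>k\<close>.\<close>
lemma left_denominator_prod_ring_proj:
  assumes rings: "\<forall>i<n. ring (R i)" and k: "k < n"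
    and S: "left_denominator (prod_ring n R) S"
    and nz: "\<zero>\<^bsub>R k\<^esub> \<notin> (\<lambda>s. s k) ` S"
  shows "left_denominator (R k) ((\<lambda>s. s k) ` S)"
proof -
  let ?P = "prod_ring n R" and ?Sk = "(\<lambda>s. s k) ` S"
  have mS: "mult_subset ?P S" and ore: "\<forall>r\<in>carrier ?P. \<forall>s\<in>S. \<exists>s'\<in>S. \<exists>r'\<in>carrier ?P. s' \<otimes>\<^bsub>?P\<^esub> r = r' \<otimes>\<^bsub>?P\<^esub> s"
    and den: "\<forall>r\<in>carrier ?P. \<forall>s\<in>S. r \<otimes>\<^bsub>?P\<^esub> s = \<zero>\<^bsub>?P\<^esub> \<longrightarrow> (\<exists>t\<in>S. t \<otimes>\<^bsub>?P\<^esub> r = \<zero>\<^bsub>?P\<^esub>)"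
    using S unfolding left_denominator_def left_Ore_def by blast+
  have SP: "S \<subseteq> carrier ?P" using mS unfolding mult_subset_def by blast
  have mult_k: "(f \<otimes>\<^bsub>?P\<^esub> g) k = f k \<otimes>\<^bsub>R k\<^esub> g k" for f g
    using k by (simp add: prod_ring_mult)
  have "mult_subset (R k) ?Sk"
    using mult_subset_prod_ring_proj[OF k mS nz] .
  moreover have "\<exists>\<sigma>'\<in>?Sk. \<exists>x'\<in>carrier (R k). \<sigma>' \<otimes>\<^bsub>R k\<^esub> x = x' \<otimes>\<^bsub>R k\<^esub> s k"
    if x: "x \<in> carrier (R k)" and s: "s \<in> S" for x s
  proof -
    obtain s' x' where s': "s' \<in> S" and x': "x' \<in> carrier ?P"
      and eq: "s' \<otimes>\<^bsub>?P\<^esub> prod_single n R k x = x' \<otimes>\<^bsub>?P\<^esub> s"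
      using ore prod_single_closed[OF rings k x] s by blast
    from arg_cong[OF eq, of "\<lambda>f. f k"] k
    have "s' k \<otimes>\<^bsub>R k\<^esub> x = x' k \<otimes>\<^bsub>R k\<^esub> s k" by (simp add: mult_k)
    moreover have "x' k \<in> carrier (R k)" using prod_ring_carrier_apply[OF x' k] .
    ultimately show ?thesis using s' by blast
  qed
  moreover have "\<exists>t\<in>?Sk. t \<otimes>\<^bsub>R k\<^esub> x = \<zero>\<^bsub>R k\<^esub>"
    if x: "x \<in> carrier (R k)" and s: "s \<in> S" and xs: "x \<otimes>\<^bsub>R k\<^esub> s k = \<zero>\<^bsub>R k\<^esub>" for x s
  proof -
    have "prod_single n R k x \<otimes>\<^bsub>?P\<^esub> s = \<zero>\<^bsub>?P\<^esub>"
      using prod_single_mult_right[OF rings k] s SP xs prod_single_zero by (metis subsetD)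
    then obtain t where t: "t \<in> S" and eq: "t \<otimes>\<^bsub>?P\<^esub> prod_single n R k x = \<zero>\<^bsub>?P\<^esub>"
      using den prod_single_closed[OF rings k x] s by blast
    from arg_cong[OF eq, of "\<lambda>f. f k"] k
    have "t k \<otimes>\<^bsub>R k\<^esub> x = \<zero>\<^bsub>R k\<^esub>" by (simp add: mult_k prod_ring_zero)
    then show ?thesis using t by blast
  qed
  ultimately show ?thesis
    unfolding left_denominator_def left_Ore_def by blast
qed

lemma Units_if_prod_single_left_localizable:
  assumes rings: "\<forall>i<n. ring (R i)" and k: "k < n"
    and a: "a \<in> carrier (R k)" and llm: "left_loc_maximal (R k)"
    and loc: "left_localizable (prod_ring n R) (prod_single n R k a)"
  shows "a \<in> Units (R k)"
proof -
  let ?P = "prod_ring n R"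
  obtain S where S: "left_denominator ?P S" and aS: "prod_single n R k a \<in> S"
    using loc unfolding left_localizable_def Den_l_def by blast
  have mS: "mult_subset ?P S" using S unfolding left_denominator_def left_Ore_def by blast
  have "\<zero>\<^bsub>R k\<^esub> \<notin> (\<lambda>s. s k) ` S"
  proof
    assume "\<zero>\<^bsub>R k\<^esub> \<in> (\<lambda>s. s k) ` S"
    then obtain s where s: "s \<in> S" "s k = \<zero>\<^bsub>R k\<^esub>" by auto
    have "s \<in> carrier ?P" using s mS unfolding mult_subset_def by blast
    then have "s \<otimes>\<^bsub>?P\<^esub> prod_single n R k a = \<zero>\<^bsub>?P\<^esub>"
      using prod_single_mult_left[OF rings k] s a k rings prod_single_zero
      by (simp add: ring.ring_simprules)
    moreover have "s \<otimes>\<^bsub>?P\<^esub> prod_single n R k a \<in> S"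
      using mS s aS unfolding mult_subset_def by blast
    ultimately show False using mS unfolding mult_subset_def by simp
  qed
  then have "(\<lambda>s. s k) ` S \<in> Den_l (R k)"
    using left_denominator_prod_ring_proj[OF rings k S] by (simp add: Den_l_def)
  then have "(\<lambda>s. s k) ` S \<subseteq> Units (R k)"
    by (rule left_loc_maximal_Den_l_subset_Units[OF llm])
  moreover have "a \<in> (\<lambda>s. s k) ` S"
    using aS k by (metis prod_single_apply_self image_eqI)
  ultimately show ?thesis by blast
qed

definition prod_nonvanishing :: "nat \<Rightarrow> (nat \<Rightarrow> ('a, 'b) ring_scheme) \<Rightarrow> nat set \<Rightarrow> (nat \<Rightarrow> 'a) set" where
  "prod_nonvanishing n R I = {s \<in> carrier (prod_ring n R). \<forall>i\<in>I. s i \<noteq> \<zero>\<^bsub>R i\<^esub>}"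

definition prod_indicator :: "nat \<Rightarrow> (nat \<Rightarrow> ('a, 'b) ring_scheme) \<Rightarrow> nat set \<Rightarrow> nat \<Rightarrow> 'a" where
  "prod_indicator n R I = (\<lambda>i\<in>{..<n}. if i \<in> I then \<one>\<^bsub>R i\<^esub> else \<zero>\<^bsub>R i\<^esub>)"

lemma prod_indicator_mem_nonvanishing:
  assumes "\<forall>i<n. division_ring (R i)" "I \<subseteq> {..<n}"
  shows "prod_indicator n R I \<in> prod_nonvanishing n R I"
  using assms
  by (auto simp: prod_nonvanishing_def prod_indicator_def prod_ring_carrier division_ring_def
      ring.ring_simprules)

lemma prod_nonvanishing_mult_subset:
  assumes D: "\<forall>i<n. division_ring (R i)" and I: "I \<subseteq> {..<n}" "I \<noteq> {}"
  shows "mult_subset (prod_ring n R) (prod_nonvanishing n R I)"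
  unfolding mult_subset_def
proof (intro conjI ballI)
  let ?P = "prod_ring n R" and ?S = "prod_nonvanishing n R I"
  show "?S \<subseteq> carrier ?P" by (auto simp: prod_nonvanishing_def)
  show "\<one>\<^bsub>?P\<^esub> \<in> ?S"
    using D I by (auto simp: prod_nonvanishing_def prod_ring_one prod_ring_carrier division_ring_def
        ring.ring_simprules)
  show "\<zero>\<^bsub>?P\<^esub> \<notin> ?S" using I by (auto simp: prod_nonvanishing_def prod_ring_zero)
next
  fix s t assume s: "s \<in> prod_nonvanishing n R I" and t: "t \<in> prod_nonvanishing n R I"
  have "(s \<otimes>\<^bsub>prod_ring n R\<^esub> t) i \<noteq> \<zero>\<^bsub>R i\<^esub>" if i: "i \<in> I" for i
  proof -
    have "i < n" using i I by blast
    moreover have "s i \<in> carrier (R i)" "t i \<in> carrier (R i)" "s i \<noteq> \<zero>\<^bsub>R i\<^esub>" "t i \<noteq> \<zero>\<^bsub>R i\<^esub>"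
      using s t i \<open>i < n\<close> prod_ring_carrier_apply by (auto simp: prod_nonvanishing_def)
    ultimately have "s i \<otimes>\<^bsub>R i\<^esub> t i \<noteq> \<zero>\<^bsub>R i\<^esub>"
      using division_ring_integral[of "R i" "s i" "t i"] D by blast
    with \<open>i < n\<close> show ?thesis by (simp add: prod_ring_mult)
  qed
  then show "s \<otimes>\<^bsub>prod_ring n R\<^esub> t \<in> prod_nonvanishing n R I"
    using s t prod_ring_mult_closed[of n R s t] D
    by (auto simp: prod_nonvanishing_def division_ring_def)
qed

lemma prod_indicator_left_Ore_witness:
  assumes D: "\<forall>i<n. division_ring (R i)" and I: "I \<subseteq> {..<n}"
    and a: "a \<in> carrier (prod_ring n R)" and s: "s \<in> prod_nonvanishing n R I"
  shows "\<exists>a'\<in>carrier (prod_ring n R).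
           prod_indicator n R I \<otimes>\<^bsub>prod_ring n R\<^esub> a = a' \<otimes>\<^bsub>prod_ring n R\<^esub> s"
proof
  let ?a' = "\<lambda>i\<in>{..<n}. if i \<in> I then a i \<otimes>\<^bsub>R i\<^esub> inv\<^bsub>R i\<^esub> (s i) else \<zero>\<^bsub>R i\<^esub>"
  have sP: "s \<in> carrier (prod_ring n R)" using s by (simp add: prod_nonvanishing_def)
  have unit: "s i \<in> Units (R i)" if "i \<in> I" for i
    using division_ring_Units[of "R i" "s i"] D I s that prod_ring_carrier_apply[OF sP]
    by (auto simp: prod_nonvanishing_def)
  have "?a' i \<in> carrier (R i)" if i: "i < n" for i
  proof -
    interpret ring "R i" using D i by (simp add: division_ring_def)
    show ?thesis using i unit prod_ring_carrier_apply[OF a i] by auto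
  qed
  then show "?a' \<in> carrier (prod_ring n R)" by (simp add: prod_ring_carrier)
  show "prod_indicator n R I \<otimes>\<^bsub>prod_ring n R\<^esub> a = ?a' \<otimes>\<^bsub>prod_ring n R\<^esub> s"
    unfolding prod_ring_mult
  proof (rule restrict_ext)
    fix i assume "i \<in> {..<n}"
    then have i: "i < n" by simp
    interpret ring "R i" using D i by (simp add: division_ring_def)
    show "prod_indicator n R I i \<otimes>\<^bsub>R i\<^esub> a i = ?a' i \<otimes>\<^bsub>R i\<^esub> s i"
      using i unit prod_ring_carrier_apply[OF a i] prod_ring_carrier_apply[OF sP i]
      by (simp add: prod_indicator_def m_assoc)
  qed
qed

text \<open>\<open>a s = 0\<close> with \<open>s\<close> invertible on \<open>I\<close> forces \<open>a\<close> to vanish on \<open>I\<close>.\<close>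
lemma prod_indicator_annihilates:
  assumes D: "\<forall>i<n. division_ring (R i)"
    and a: "a \<in> carrier (prod_ring n R)" and s: "s \<in> prod_nonvanishing n R I"
    and as: "a \<otimes>\<^bsub>prod_ring n R\<^esub> s = \<zero>\<^bsub>prod_ring n R\<^esub>"
  shows "prod_indicator n R I \<otimes>\<^bsub>prod_ring n R\<^esub> a = \<zero>\<^bsub>prod_ring n R\<^esub>"
  unfolding prod_ring_mult prod_ring_zero
proof (rule restrict_ext)
  fix i assume "i \<in> {..<n}"
  then have i: "i < n" by simp
  interpret ring "R i" using D i by (simp add: division_ring_def)
  have ai: "a i \<in> carrier (R i)" using prod_ring_carrier_apply[OF a i] .
  have si: "s i \<in> carrier (R i)"
    using s i prod_ring_carrier_apply by (auto simp: prod_nonvanishing_def)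
  have "a i \<otimes>\<^bsub>R i\<^esub> s i = \<zero>\<^bsub>R i\<^esub>"
    using fun_cong[OF as, of i] i by (simp add: prod_ring_mult prod_ring_zero)
  then have "i \<in> I \<Longrightarrow> a i = \<zero>\<^bsub>R i\<^esub>"
    using division_ring_integral[of "R i" "a i" "s i"] D i ai si s
    by (auto simp: prod_nonvanishing_def)
  then show "prod_indicator n R I i \<otimes>\<^bsub>R i\<^esub> a i = \<zero>\<^bsub>R i\<^esub>"
    using i ai by (auto simp: prod_indicator_def)
qed

lemma prod_nonvanishing_Den_l:
  assumes D: "\<forall>i<n. division_ring (R i)" and I: "I \<subseteq> {..<n}" "I \<noteq> {}"
  shows "prod_nonvanishing n R I \<in> Den_l (prod_ring n R)"
  using prod_nonvanishing_mult_subset[OF D I] prod_indicator_mem_nonvanishing[OF D I(1)]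
    prod_indicator_left_Ore_witness[OF D I(1)] prod_indicator_annihilates[OF D]
  unfolding Den_l_def left_denominator_def left_Ore_def by blast

lemma prod_nonzero_left_localizable:
  assumes D: "\<forall>i<n. division_ring (R i)"
    and r: "r \<in> carrier (prod_ring n R)" "r \<noteq> \<zero>\<^bsub>prod_ring n R\<^esub>"
  shows "left_localizable (prod_ring n R) r"
proof -
  let ?I = "{i. i < n \<and> r i \<noteq> \<zero>\<^bsub>R i\<^esub>}"
  have "?I \<noteq> {}" using r prod_ring_eq_zero_iff by blast
  then have "prod_nonvanishing n R ?I \<in> Den_l (prod_ring n R)"
    by (intro prod_nonvanishing_Den_l[OF D]) auto
  moreover have "r \<in> prod_nonvanishing n R ?I"
    using r(1) by (simp add: prod_nonvanishing_def)
  ultimately show ?thesis unfolding left_localizable_def by blast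
qed

theorem corollary2p10:
  fixes R :: "nat \<Rightarrow> ('a, 'b) ring_scheme" and n :: nat
  assumes "\<forall>i<n. ring (R i)"
    and "\<forall>i<n. left_loc_maximal (R i)"
  shows "(\<forall>r\<in>carrier (prod_ring n R). r \<noteq> \<zero>\<^bsub>prod_ring n R\<^esub> \<longrightarrow>
            left_localizable (prod_ring n R) r)
         \<longleftrightarrow> (\<forall>i<n. division_ring (R i))"
proof
  assume loc: "\<forall>r\<in>carrier (prod_ring n R). r \<noteq> \<zero>\<^bsub>prod_ring n R\<^esub> \<longrightarrow>
            left_localizable (prod_ring n R) r"
  show "\<forall>k<n. division_ring (R k)"
  proof (intro allI impI)
    fix k assume k: "k < n"
    have "a \<in> Units (R k)" if a: "a \<in> carrier (R k)" "a \<noteq> \<zero>\<^bsub>R k\<^esub>" for a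
    proof -
      have single: "prod_single n R k a \<in> carrier (prod_ring n R)"
        using prod_single_closed[OF assms(1) k a(1)] .
      moreover have "prod_single n R k a \<noteq> \<zero>\<^bsub>prod_ring n R\<^esub>"
        using prod_ring_eq_zero_iff[OF single] a(2) k prod_single_apply_self by metis
      ultimately show ?thesis
        using Units_if_prod_single_left_localizable[OF assms(1) k a(1)] assms(2) k loc by blast
    qed
    then show "division_ring (R k)"
      using assms k left_loc_maximal_one_neq_zero unfolding division_ring_def by blast
  qed
qed (use prod_nonzero_left_localizable in blast)

end
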